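(* Let $d, r$ be positive integers with $r \geq 2$ and such that $m := r \log r$ is a positive integer, and let $B > 0$, $\epsilon > 0$, $0 < \delta < 1$. Let $\eta$ be an $m \times (d+1)$ random matrix whose rows $\eta_1, \ldots, \eta_m$ are independent, each with independent coordinates distributed as $\mathcal{N}\!\left(0, \frac{8B^2 \ln(1.25/\delta)}{\epsilon^2}\right)$. Fix $\beta \in \mathbb{R}^d$ and let $\beta_{-1} = \begin{bmatrix} \beta \\ -1 \end{bmatrix} \in \mathbb{R}^{d+1}$. Then there is an absolute constant $c > 0$ (independent of $d, r, B, \epsilon, \delta, \beta$) such that, with probability at least $c$, $$\|\eta \beta_{-1}\|_1 \leq \frac{2B\, r \log r \sqrt{2 \ln(1.25/\delta)}}{\epsilon}\, \|\beta_{-1}\|_1 .$$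
   Context: This bound is used in the paper for the regularization term arising when a sketch $S\hat{A}$ of the noise-augmented matrix $\hat{A} = \begin{bmatrix} A \\ \eta \end{bmatrix}$ is released for private $\ell_1$ regression, where $A \in \mathbb{R}^{n \times (d+1)}$ is a data matrix with rows of $\ell_2$ norm at most $B$ and $S \in \{0,1\}^{r \times (n + r\log r)}$ has a single $1$ in each column. "With constant probability" in the paper is interpreted as "with probability at least some absolute positive constant". *)

theory Defs
  imports "HOL-Probability.Probability"
begin

text \<open>Distribution of the m x (d+1) noise matrix eta: all entries independent,
  each Gaussian N(0, sigma^2) with standard deviation sigma.\<close>
definition noise_matrix_dist :: "nat \<Rightarrow> nat \<Rightarrow> real \<Rightarrow> (nat \<times> nat \<Rightarrow> real) measure" where
  "noise_matrix_dist m d \<sigma> =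
     PiM ({..<m} \<times> {..<Suc d}) (\<lambda>_. density lborel (normal_density 0 \<sigma>))"

definition beta_ext :: "nat \<Rightarrow> (nat \<Rightarrow> real) \<Rightarrow> nat \<Rightarrow> real" where
  "beta_ext d \<beta> j = (if j < d then \<beta> j else -1)"

definition l1_mat_vec :: "nat \<Rightarrow> nat \<Rightarrow> (nat \<times> nat \<Rightarrow> real) \<Rightarrow> (nat \<Rightarrow> real) \<Rightarrow> real" where
  "l1_mat_vec m d \<eta> v = (\<Sum>i<m. \<bar>\<Sum>j<Suc d. \<eta> (i, j) * v j\<bar>)"

end

theory Submission
  imports Defs
begin

text \<open>By the triangle inequality \<open>\<parallel>\<eta> \<beta>\<^sub>-\<^sub>1\<parallel>\<^sub>1 \<le> \<Sum>\<^sub>i \<Sum>\<^sub>j \<bar>\<beta>\<^sub>-\<^sub>1 j\<bar> \<bar>\<eta>\<^sub>i\<^sub>j\<bar>\<close>, and since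
  \<open>E \<bar>N(0,\<sigma>\<^sup>2)\<bar> = \<sigma> sqrt (2/\<pi>)\<close> the right-hand side has mean
  \<open>sqrt (2/\<pi>) m \<sigma> \<parallel>\<beta>\<^sub>-\<^sub>1\<parallel>\<^sub>1\<close>.  As \<open>m = r log r\<close>, the threshold in the statement is
  exactly \<open>m \<sigma> \<parallel>\<beta>\<^sub>-\<^sub>1\<parallel>\<^sub>1\<close>, so Markov's inequality gives success probability at least
  \<open>1 - sqrt (2/\<pi>) > 0\<close>.\<close>

lemma has_bochner_integral_PiM_normal_abs_component:
  fixes I :: "'i set"
  assumes \<sigma>: "0 < \<sigma>" and x: "x \<in> I"
  shows "has_bochner_integral (PiM I (\<lambda>_. density lborel (normal_density 0 \<sigma>)))
           (\<lambda>\<eta>. \<bar>\<eta> x\<bar>) (\<sigma> * sqrt (2 / pi))"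
proof -
  let ?N = "density lborel (normal_density 0 \<sigma>)"
  let ?M = "PiM I (\<lambda>_. ?N)"
  have "has_bochner_integral lborel (\<lambda>x. normal_density 0 \<sigma> x * \<bar>x - 0\<bar> ^ (2 * 0 + 1))
          (2 ^ 0 * \<sigma> ^ (2 * 0 + 1) * fact 0 * sqrt (2 / pi))"
    by (rule normal_moment_abs_odd[OF \<sigma>])
  then have "has_bochner_integral ?N abs (\<sigma> * sqrt (2 / pi))"
    by (intro has_bochner_integral_density) auto
  moreover have "distr ?M ?N (\<lambda>\<omega>. \<omega> x) = ?N"
    using prob_space_normal_density[OF \<sigma>] x by (intro distr_PiM_component) auto
  moreover have meas: "(\<lambda>\<omega>. \<omega> x) \<in> measurable ?M ?N"
    using x by (rule measurable_component_singleton)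
  ultimately show ?thesis
    using integrable_distr_eq[OF meas, of abs] integral_distr[OF meas, of abs]
    by (simp add: has_bochner_integral_iff)
qed

lemma (in prob_space) prob_le_ge_Markov_dominated:
  assumes Y: "has_bochner_integral M Y e" and Y_nonneg: "\<And>x. 0 \<le> Y x"
    and X[measurable]: "X \<in> borel_measurable M" and X_le_Y: "\<And>x. X x \<le> Y x" and T: "0 < T"
  shows "1 - e / T \<le> prob {x \<in> space M. X x \<le> T}"
proof -
  have [measurable]: "Y \<in> borel_measurable M" and Y_int: "integrable M Y"
    and e: "expectation Y = e"
    using Y by (auto simp: has_bochner_integral_iff)
  have "prob {x \<in> space M. T \<le> Y x} \<le> e / T"
    using integral_Markov_inequality_measure[OF Y_int sets.top AE_I2[OF Y_nonneg] T] e by simp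
  moreover have "prob (space M - {x \<in> space M. T \<le> Y x}) = 1 - prob {x \<in> space M. T \<le> Y x}"
    by (intro prob_compl) measurable
  moreover have "space M - {x \<in> space M. T \<le> Y x} \<subseteq> {x \<in> space M. X x \<le> T}"
    using X_le_Y by (force simp: not_le intro: order.trans less_imp_le)
  then have "prob (space M - {x \<in> space M. T \<le> Y x}) \<le> prob {x \<in> space M. X x \<le> T}"
    by (intro finite_measure_mono) measurable
  ultimately show ?thesis by linarith
qed

lemma l1_mat_vec_le_sum_abs:
  "l1_mat_vec m d \<eta> v \<le> (\<Sum>i<m. \<Sum>j<Suc d. \<bar>v j\<bar> * \<bar>\<eta> (i, j)\<bar>)"
  unfolding l1_mat_vec_def
  by (intro sum_mono order_trans[OF sum_abs]) (simp add: abs_mult mult.commute)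

lemma has_bochner_integral_noise_sum_abs:
  assumes "0 < \<sigma>"
  shows "has_bochner_integral (noise_matrix_dist m d \<sigma>)
           (\<lambda>\<eta>. \<Sum>i<m. \<Sum>j<Suc d. \<bar>v j\<bar> * \<bar>\<eta> (i, j)\<bar>)
           (real m * \<sigma> * (\<Sum>j<Suc d. \<bar>v j\<bar>) * sqrt (2 / pi))"
proof -
  have "has_bochner_integral (noise_matrix_dist m d \<sigma>)
          (\<lambda>\<eta>. \<Sum>i<m. \<Sum>j<Suc d. \<bar>v j\<bar> * \<bar>\<eta> (i, j)\<bar>)
          (\<Sum>i<m. \<Sum>j<Suc d. \<bar>v j\<bar> * (\<sigma> * sqrt (2 / pi)))"
    unfolding noise_matrix_dist_def
    by (intro has_bochner_integral_sum has_bochner_integral_mult_right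
        has_bochner_integral_PiM_normal_abs_component assms) auto
  moreover have "(\<Sum>i<m. \<Sum>j<Suc d. \<bar>v j\<bar> * (\<sigma> * sqrt (2 / pi)))
      = real m * \<sigma> * (\<Sum>j<Suc d. \<bar>v j\<bar>) * sqrt (2 / pi)"
    by (simp only: sum_distrib_right[symmetric] sum_constant) (simp add: mult_ac)
  ultimately show ?thesis
    by (simp only:)
qed

lemma prob_l1_mat_vec_le:
  assumes \<sigma>: "0 < \<sigma>" and m: "1 \<le> m" and v: "0 < (\<Sum>j<Suc d. \<bar>v j\<bar>)"
  shows "1 - sqrt (2 / pi) \<le> measure (noise_matrix_dist m d \<sigma>)
           {\<eta> \<in> space (noise_matrix_dist m d \<sigma>).
              l1_mat_vec m d \<eta> v \<le> real m * \<sigma> * (\<Sum>j<Suc d. \<bar>v j\<bar>)}"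
proof -
  interpret prob_space "noise_matrix_dist m d \<sigma>"
    unfolding noise_matrix_dist_def by (intro prob_space_PiM prob_space_normal_density \<sigma>)
  define T where "T = real m * \<sigma> * (\<Sum>j<Suc d. \<bar>v j\<bar>)"
  have T: "0 < T"
    unfolding T_def using \<sigma> m v by simp
  have "(\<lambda>\<eta>. l1_mat_vec m d \<eta> v) \<in> borel_measurable (noise_matrix_dist m d \<sigma>)"
    unfolding l1_mat_vec_def noise_matrix_dist_def by measurable
  from prob_le_ge_Markov_dominated[OF has_bochner_integral_noise_sum_abs[OF \<sigma>] _ this
      l1_mat_vec_le_sum_abs T]
  have "1 - T * sqrt (2 / pi) / T \<le> prob {\<eta> \<in> space (noise_matrix_dist m d \<sigma>).
          l1_mat_vec m d \<eta> v \<le> T}"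
    unfolding T_def by (simp add: sum_nonneg del: sum.lessThan_Suc)
  with T show ?thesis
    unfolding T_def[symmetric] by simp
qed

lemma sum_abs_beta_ext_ge_1: "1 \<le> (\<Sum>j<Suc d. \<bar>beta_ext d \<beta> j\<bar>)"
  using member_le_sum[of d "{..<Suc d}" "\<lambda>j. \<bar>beta_ext d \<beta> j\<bar>"]
  by (simp add: beta_ext_def)

lemma sqrt_8_square_div_square:
  assumes "0 \<le> B" "0 < \<epsilon>" "0 \<le> L"
  shows "sqrt (8 * B\<^sup>2 * L / \<epsilon>\<^sup>2) = 2 * B * sqrt (2 * L) / \<epsilon>"
  using assms
  by (intro real_sqrt_unique) (auto simp: power2_eq_square power_mult_distrib field_simps)

theorem lemma2:
  shows "\<exists>c::real. c > 0 \<and>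
    (\<forall>(d::nat) (r::nat) (m::nat) (B::real) (\<epsilon>::real) (\<delta>::real) (\<beta>::nat \<Rightarrow> real).
       d \<ge> 1 \<longrightarrow> r \<ge> 2 \<longrightarrow> m \<ge> 1 \<longrightarrow> real m = real r * log 2 (real r) \<longrightarrow>
       B > 0 \<longrightarrow> \<epsilon> > 0 \<longrightarrow> 0 < \<delta> \<longrightarrow> \<delta> < 1 \<longrightarrow>
       (let \<sigma> = sqrt (8 * B\<^sup>2 * ln ((5/4) / \<delta>) / \<epsilon>\<^sup>2);
            M = noise_matrix_dist m d \<sigma>
        in measure M {\<eta> \<in> space M.
              l1_mat_vec m d \<eta> (beta_ext d \<beta>)
                \<le> 2 * B * (real r * log 2 (real r)) * sqrt (2 * ln ((5/4) / \<delta>)) / \<epsilon>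
                    * (\<Sum>j<Suc d. \<bar>beta_ext d \<beta> j\<bar>)} \<ge> c))"
proof (intro exI[of _ "1 - sqrt (2 / pi)"] conjI allI impI)
  show "0 < 1 - sqrt (2 / pi)"
    using pi_gt3 by simp
next
  fix d r m :: nat and B \<epsilon> \<delta> :: real and \<beta> :: "nat \<Rightarrow> real"
  assume m: "m \<ge> 1" and m_eq: "real m = real r * log 2 (real r)"
    and B: "B > 0" and \<epsilon>: "\<epsilon> > 0" and "0 < \<delta>" "\<delta> < 1"
  define L where "L = ln ((5/4) / \<delta>)"
  define \<sigma> where "\<sigma> = 2 * B * sqrt (2 * L) / \<epsilon>"
  have "0 < L"
    unfolding L_def using \<open>0 < \<delta>\<close> \<open>\<delta> < 1\<close> by simp
  then have \<sigma>_eq: "sqrt (8 * B\<^sup>2 * L / \<epsilon>\<^sup>2) = \<sigma>" and "0 < \<sigma>"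
    unfolding \<sigma>_def using B \<epsilon> sqrt_8_square_div_square[of B \<epsilon> L] by auto
  then have "1 - sqrt (2 / pi) \<le> measure (noise_matrix_dist m d \<sigma>)
      {\<eta> \<in> space (noise_matrix_dist m d \<sigma>).
         l1_mat_vec m d \<eta> (beta_ext d \<beta>) \<le> real m * \<sigma> * (\<Sum>j<Suc d. \<bar>beta_ext d \<beta> j\<bar>)}"
    using m sum_abs_beta_ext_ge_1[of d \<beta>] by (intro prob_l1_mat_vec_le) auto
  then show "let \<sigma> = sqrt (8 * B\<^sup>2 * L / \<epsilon>\<^sup>2); M = noise_matrix_dist m d \<sigma>
      in measure M {\<eta> \<in> space M.
           l1_mat_vec m d \<eta> (beta_ext d \<beta>)
             \<le> 2 * B * (real r * log 2 (real r)) * sqrt (2 * L) / \<epsilon>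
               * (\<Sum>j<Suc d. \<bar>beta_ext d \<beta> j\<bar>)} \<ge> 1 - sqrt (2 / pi)"
    unfolding Let_def \<sigma>_eq m_eq[symmetric] \<sigma>_def by (simp add: mult_ac)
qed

end
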